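(* Let $n\ge1$, $d\ge2$, $t\ge1$, and let $\{h_\alpha\}$ be a finite family of Hermitian operators on $(\mathbb C^d)^{\otimes n}$ each of which satisfies $U^{\otimes n}h_\alpha (U^* )^{\otimes n}=h_\alpha$ for all $U\in U(d)$. Then for every degree-$2t$ pseudo-density matrix $\tilde\rho$ (in particular every density matrix, which is the case $t=n$) there is a degree-$2t$ pseudo-density matrix $\tilde\rho'$ (a density matrix if $\tilde\rho$ is one) such that $\operatorname{tr}(\tilde\rho'\Lambda^a_u)=0$ for all $a\in[d^2-1]$ and $u\in[n]$, and $\operatorname{tr}(\tilde\rho' h_\alpha)=\operatorname{tr}(\tilde\rho h_\alpha)$ for every $\alpha$.
   Context: $\Lambda^1,\dots,\Lambda^{d^2-1}$ are the generalized Gell-Mann matrices ($|a\rangle\langle b|+|b\rangle\langle a|$, $-i|a\rangle\langle b|+i|b\rangle\langle a|$ for $a<b$, and $\sqrt{\frac{2}{a(a+1)}}(\sum_{b\le a}|b\rangle\langle b|-a|a+1\rangle\langle a+1|)$ for $1\le a\le d-1$), and $\Lambda^0=\sqrt{2/d}\,I$. $\Lambda^a_u$ denotes $\Lambda^a$ acting on qudit $u$ tensored with identity elsewhere. The products $\Lambda^{a_1}\otimes\cdots\otimes\Lambda^{a_n}$, $a_i\in\{0,\dots,d^2-1\}$, form a basis of operators on $(\mathbb C^d)^{\otimes n}$; the degree of such a basis element is the number of $i$ with $a_i\ne0$, and the degree of an operator is the maximum degree of basis elements with nonzero coefficient in its expansion. A degree-$2t$ pseudo-density matrix is an operator $\tilde\rho$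 on $(\mathbb C^d)^{\otimes n}$ with $\tilde\rho^*=\tilde\rho$, $\operatorname{tr}\tilde\rho=1$, and $\operatorname{tr}(\tilde\rho A^*A)\ge0$ for every operator $A$ of degree at most $t$. *)

theory Defs
  imports Complex_Main
begin

text \<open>Operators on (C^d)^{\<otimes>n} are represented as complex-valued functions on pairs of
computational-basis words; a word is a list of length n with entries in {0..<d}.
Only the values on words matter.  Single-qudit matrices are functions on {0..<d}^2.\<close>

type_synonym qmat = "nat \<Rightarrow> nat \<Rightarrow> complex"
type_synonym qop = "nat list \<Rightarrow> nat list \<Rightarrow> complex"

definition words :: "nat \<Rightarrow> nat \<Rightarrow> nat list set" where
  "words n d = {xs. length xs = n \<and> (\<forall>x\<in>set xs. x < d)}"

definition op_mult :: "nat \<Rightarrow> nat \<Rightarrow> qop \<Rightarrow> qop \<Rightarrow> qop" where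
  "op_mult n d A B x y = (\<Sum>z\<in>words n d. A x z * B z y)"

definition op_adj :: "qop \<Rightarrow> qop" where
  "op_adj A x y = cnj (A y x)"

definition op_tr :: "nat \<Rightarrow> nat \<Rightarrow> qop \<Rightarrow> complex" where
  "op_tr n d A = (\<Sum>x\<in>words n d. A x x)"

definition op_eq :: "nat \<Rightarrow> nat \<Rightarrow> qop \<Rightarrow> qop \<Rightarrow> bool" where
  "op_eq n d A B \<longleftrightarrow> (\<forall>x\<in>words n d. \<forall>y\<in>words n d. A x y = B x y)"

definition op_hermitian :: "nat \<Rightarrow> nat \<Rightarrow> qop \<Rightarrow> bool" where
  "op_hermitian n d A \<longleftrightarrow> op_eq n d (op_adj A) A"

text \<open>Labels of generalized Gell-Mann matrices (basis states indexed 0..d-1):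
  GSym a b = |a><b| + |b><a|, GAsym a b = -i|a><b| + i|b><a| (a<b<d),
  GDiag a (1 \<le> a \<le> d-1) = sqrt(2/(a(a+1))) (sum_{i<a} |i><i| - a|a><a|)
  (the paper's 1-based formula shifted to 0-based indices), GId = Lambda^0 = sqrt(2/d) I.\<close>

datatype gm = GId | GSym nat nat | GAsym nat nat | GDiag nat

definition gm_valid :: "nat \<Rightarrow> gm \<Rightarrow> bool" where
  "gm_valid d g = (case g of GId \<Rightarrow> True
     | GSym a b \<Rightarrow> a < b \<and> b < d
     | GAsym a b \<Rightarrow> a < b \<and> b < d
     | GDiag a \<Rightarrow> 1 \<le> a \<and> a \<le> d - 1)"

definition gm_mat :: "nat \<Rightarrow> gm \<Rightarrow> qmat" where
  "gm_mat d g i j = (case g of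
       GId \<Rightarrow> (if i = j then complex_of_real (sqrt (2 / real d)) else 0)
     | GSym a b \<Rightarrow> (if (i = a \<and> j = b) \<or> (i = b \<and> j = a) then 1 else 0)
     | GAsym a b \<Rightarrow> (if i = a \<and> j = b then - \<i> else if i = b \<and> j = a then \<i> else 0)
     | GDiag a \<Rightarrow> (if i \<noteq> j then 0 else
          complex_of_real (sqrt (2 / (real a * (real a + 1)))) *
          (if i < a then 1 else if i = a then - of_nat a else 0)))"

definition gm_prod :: "nat \<Rightarrow> gm list \<Rightarrow> qop" where
  "gm_prod d gs x y = (\<Prod>i<length gs. gm_mat d (gs ! i) (x ! i) (y ! i))"

definition gm_degree :: "gm list \<Rightarrow> nat" where
  "gm_degree gs = card {i. i < length gs \<and> gs ! i \<noteq> GId}"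

definition gm_labels :: "nat \<Rightarrow> nat \<Rightarrow> gm list set" where
  "gm_labels n d = {gs. length gs = n \<and> (\<forall>g\<in>set gs. gm_valid d g)}"

definition deg_le :: "nat \<Rightarrow> nat \<Rightarrow> nat \<Rightarrow> qop \<Rightarrow> bool" where
  "deg_le n d t A \<longleftrightarrow> (\<exists>c :: gm list \<Rightarrow> complex.
     op_eq n d A (\<lambda>x y. \<Sum>gs\<in>{gs\<in>gm_labels n d. gm_degree gs \<le> t}. c gs * gm_prod d gs x y))"

definition gm_local :: "nat \<Rightarrow> nat \<Rightarrow> nat \<Rightarrow> gm \<Rightarrow> qop" where
  "gm_local n d u g x y = gm_mat d g (x ! u) (y ! u) *
     (\<Prod>i\<in>{..<n} - {u}. if x ! i = y ! i then 1 else 0)"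

definition pseudo_density :: "nat \<Rightarrow> nat \<Rightarrow> nat \<Rightarrow> qop \<Rightarrow> bool" where
  "pseudo_density n d t \<rho> \<longleftrightarrow> op_hermitian n d \<rho> \<and> op_tr n d \<rho> = 1 \<and>
     (\<forall>A. deg_le n d t A \<longrightarrow>
        (let z = op_tr n d (op_mult n d \<rho> (op_mult n d (op_adj A) A)) in z \<in> \<real> \<and> Re z \<ge> 0))"

definition density_matrix :: "nat \<Rightarrow> nat \<Rightarrow> qop \<Rightarrow> bool" where
  "density_matrix n d \<rho> \<longleftrightarrow> op_hermitian n d \<rho> \<and> op_tr n d \<rho> = 1 \<and>
     (\<forall>v :: nat list \<Rightarrow> complex.
        (let z = (\<Sum>x\<in>words n d. \<Sum>y\<in>words n d. cnj (v x) * \<rho> x y * v y) in z \<in> \<real> \<and> Re z \<ge> 0))"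

definition unitary_mat :: "nat \<Rightarrow> qmat \<Rightarrow> bool" where
  "unitary_mat d U \<longleftrightarrow> (\<forall>i<d. \<forall>j<d. (\<Sum>k<d. cnj (U k i) * U k j) = (if i = j then 1 else 0))"

definition tensor_power :: "nat \<Rightarrow> qmat \<Rightarrow> qop" where
  "tensor_power n U x y = (\<Prod>i<n. U (x ! i) (y ! i))"

definition unitary_invariant :: "nat \<Rightarrow> nat \<Rightarrow> qop \<Rightarrow> bool" where
  "unitary_invariant n d h \<longleftrightarrow> (\<forall>U. unitary_mat d U \<longrightarrow>
     op_eq n d (op_mult n d (op_mult n d (tensor_power n U) h) (op_adj (tensor_power n U))) h)"

end

theory Submission
  imports Defs "HOL-Library.Complex_Order"
begin

(* Replace \<rho> by its twirl d\<^sup>-\<^sup>2 \<Sum>\<^sub>a\<^sub>,\<^sub>b W \<rho> W\<^sup>*, where W ranges over the n-fold tensor powers of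
   the d\<^sup>2 Weyl (clock-and-shift) unitaries X\<^sup>a Z\<^sup>b.  Each W is unitary, so the twirl is
   Hermitian of trace one and tr(twirl \<rho> \<cdot> A) is the average of tr(\<rho> \<cdot> W\<^sup>* A W).
   Conjugating by a product of single-qudit unitaries fixes the identity factors, hence
   does not raise the Gell-Mann degree; so positivity of \<rho> on squares of degree-t
   operators (or on all vectors) is inherited.  U(d)-invariant observables are fixed by
   every conjugation, so their expectations are unchanged.  Finally the Weyl unitaries
   form a 1-design, \<Sum>\<^sub>a\<^sub>,\<^sub>b W\<^sup>* L W = d tr(L) I, which kills every traceless
   single-site observable, in particular every \<Lambda>\<^sup>a\<^sub>u with a \<noteq> 0. *)

section \<open>Operators on words\<close>

lemma words_eq: "words n d = {xs. set xs \<subseteq> {..<d} \<and> length xs = n}"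
  unfolding words_def by auto

lemma finite_words [simp]: "finite (words n d)"
  unfolding words_eq by (rule finite_lists_length_eq) simp

lemma sum_lists_length_eq_prod:
  fixes f :: "nat \<Rightarrow> 'a \<Rightarrow> 'b::comm_semiring_1"
  assumes "finite A"
  shows "(\<Sum>xs\<in>{xs. set xs \<subseteq> A \<and> length xs = n}. \<Prod>i<n. f i (xs ! i)) = (\<Prod>i<n. \<Sum>a\<in>A. f i a)"
proof (induction n arbitrary: f)
  case 0
  have "{xs. set xs \<subseteq> A \<and> length xs = 0} = {[]}" by auto
  then show ?case by simp
next
  case (Suc n)
  let ?L = "{xs. set xs \<subseteq> A \<and> length xs = n}"
  have inj: "inj_on (\<lambda>(xs, a). a # xs) (?L \<times> A)" by (auto simp: inj_on_def)
  have "(\<Sum>xs\<in>{xs. set xs \<subseteq> A \<and> length xs = Suc n}. \<Prod>i<Suc n. f i (xs ! i))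
      = (\<Sum>p\<in>?L \<times> A. f 0 (snd p) * (\<Prod>i<n. f (Suc i) (fst p ! i)))"
    unfolding lists_length_Suc_eq sum.reindex[OF inj]
    by (simp only: comp_def case_prod_beta prod.lessThan_Suc_shift nth_Cons_0 nth_Cons_Suc fst_conv snd_conv)
  also have "\<dots> = (\<Sum>xs\<in>?L. \<Sum>a\<in>A. f 0 a * (\<Prod>i<n. f (Suc i) (xs ! i)))"
    by (subst sum.cartesian_product) (simp add: case_prod_beta)
  also have "\<dots> = (\<Sum>a\<in>A. f 0 a) * (\<Sum>xs\<in>?L. \<Prod>i<n. f (Suc i) (xs ! i))"
    by (simp add: sum_distrib_left sum_distrib_right)
  also have "\<dots> = (\<Prod>i<Suc n. \<Sum>a\<in>A. f i a)"
    by (simp only: Suc.IH[of "\<lambda>i. f (Suc i)"] prod.lessThan_Suc_shift)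
  finally show ?case .
qed

lemma op_mult_assoc: "op_mult n d (op_mult n d A B) C = op_mult n d A (op_mult n d B C)"
  unfolding op_mult_def
  by (intro ext) (simp add: sum_distrib_left sum_distrib_right mult.assoc, rule sum.swap)

lemma op_adj_adj [simp]: "op_adj (op_adj A) = A"
  unfolding op_adj_def by simp

lemma op_adj_mult: "op_adj (op_mult n d A B) = op_mult n d (op_adj B) (op_adj A)"
  unfolding op_adj_def op_mult_def by (intro ext) (simp add: mult.commute)

lemma op_tr_mult_commute: "op_tr n d (op_mult n d A B) = op_tr n d (op_mult n d B A)"
  unfolding op_tr_def op_mult_def by (subst sum.swap) (simp add: mult.commute)

lemma op_mult_sum_left:
  "op_mult n d (\<lambda>x y. \<Sum>p\<in>P. c p * F p x y) B = (\<lambda>x y. \<Sum>p\<in>P. c p * op_mult n d (F p) B x y)"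
  unfolding op_mult_def
  by (intro ext) (simp add: sum_distrib_left sum_distrib_right mult.assoc, rule sum.swap)

lemma op_mult_sum_right:
  "op_mult n d A (\<lambda>x y. \<Sum>p\<in>P. c p * F p x y) = (\<lambda>x y. \<Sum>p\<in>P. c p * op_mult n d A (F p) x y)"
  unfolding op_mult_def
  by (intro ext) (simp add: sum_distrib_left sum_distrib_right mult.left_commute, rule sum.swap)

lemma op_tr_sum: "op_tr n d (\<lambda>x y. \<Sum>p\<in>P. c p * F p x y) = (\<Sum>p\<in>P. c p * op_tr n d (F p))"
  unfolding op_tr_def by (simp add: sum_distrib_left, rule sum.swap)

lemma op_mult_op_eq_right:
  "op_eq n d B B' \<Longrightarrow> y \<in> words n d \<Longrightarrow> op_mult n d A B x y = op_mult n d A B' x y"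
  unfolding op_mult_def op_eq_def by (intro sum.cong) auto

(* An exact equality, although op_eq only constrains values on words: an inner factor of
   a product is only ever evaluated at words. *)
lemma op_mult_op_eq_middle:
  "op_eq n d B B' \<Longrightarrow> op_mult n d (op_mult n d A B) C = op_mult n d (op_mult n d A B') C"
  unfolding op_mult_assoc by (intro ext) (auto simp: op_mult_def op_eq_def intro!: sum.cong)

lemma op_tr_mult_op_eq:
  "op_eq n d B B' \<Longrightarrow> op_tr n d (op_mult n d A B) = op_tr n d (op_mult n d A B')"
  unfolding op_tr_def by (intro sum.cong refl) (rule op_mult_op_eq_right)

definition op_id :: qop where
  "op_id x y = (if x = y then 1 else 0)"

lemma op_mult_op_id_left:
  assumes "op_eq n d P op_id" "x \<in> words n d"
  shows "op_mult n d P B x y = B x y"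
proof -
  have "op_mult n d P B x y = (\<Sum>z\<in>words n d. if x = z then B z y else 0)"
    unfolding op_mult_def using assms by (intro sum.cong) (auto simp: op_eq_def op_id_def)
  then show ?thesis using assms(2) by simp
qed

lemma op_mult_op_id_right:
  assumes "op_eq n d P op_id" "y \<in> words n d"
  shows "op_mult n d A P x y = A x y"
proof -
  have "op_mult n d A P x y = (\<Sum>z\<in>words n d. if z = y then A x z else 0)"
    unfolding op_mult_def using assms by (intro sum.cong) (auto simp: op_eq_def op_id_def)
  then show ?thesis using assms(2) by simp
qed

lemma op_mult_cancel_middle:
  "op_eq n d P op_id \<Longrightarrow> op_mult n d A (op_mult n d P B) = op_mult n d A B"
  unfolding op_mult_def[of n d A] by (intro ext sum.cong refl) (simp add: op_mult_op_id_left)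

section \<open>Twirling by a family of unitaries\<close>

definition op_unitary :: "nat \<Rightarrow> nat \<Rightarrow> qop \<Rightarrow> bool" where
  "op_unitary n d V \<longleftrightarrow>
     op_eq n d (op_mult n d (op_adj V) V) op_id \<and> op_eq n d (op_mult n d V (op_adj V)) op_id"

(* V\<^sup>* A V; conjugation the other way round, V A V\<^sup>*, is op_conj n d (op_adj V) A. *)
definition op_conj :: "nat \<Rightarrow> nat \<Rightarrow> qop \<Rightarrow> qop \<Rightarrow> qop" where
  "op_conj n d V A = op_mult n d (op_mult n d (op_adj V) A) V"

lemma op_tr_mult_op_conj:
  "op_tr n d (op_mult n d (op_conj n d (op_adj V) R) X) = op_tr n d (op_mult n d R (op_conj n d V X))"
proof -
  have "op_tr n d (op_mult n d (op_conj n d (op_adj V) R) X)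
      = op_tr n d (op_mult n d V (op_mult n d R (op_mult n d (op_adj V) X)))"
    by (simp add: op_conj_def op_mult_assoc)
  also have "\<dots> = op_tr n d (op_mult n d (op_mult n d R (op_mult n d (op_adj V) X)) V)"
    by (rule op_tr_mult_commute)
  finally show ?thesis by (simp add: op_conj_def op_mult_assoc)
qed

lemma op_tr_op_conj:
  assumes "op_unitary n d V"
  shows "op_tr n d (op_conj n d (op_adj V) R) = op_tr n d R"
proof -
  have "op_tr n d (op_conj n d (op_adj V) R) = op_tr n d (op_mult n d (op_mult n d (op_adj V) V) R)"
    using op_tr_mult_commute[of n d "op_mult n d V R" "op_adj V"]
    by (simp add: op_conj_def op_mult_assoc)
  also have "\<dots> = op_tr n d R"
    using assms unfolding op_unitary_def op_tr_def by (simp add: op_mult_op_id_left)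
  finally show ?thesis .
qed

lemma op_adj_op_conj: "op_adj (op_conj n d V A) = op_conj n d V (op_adj A)"
  by (simp add: op_conj_def op_adj_mult op_mult_assoc)

lemma op_hermitian_op_conj:
  assumes "op_hermitian n d A"
  shows "op_hermitian n d (op_conj n d V A)"
proof -
  have "op_adj (op_conj n d V A) = op_conj n d V A"
    using assms unfolding op_hermitian_def op_adj_op_conj unfolding op_conj_def
    by (rule op_mult_op_eq_middle)
  then show ?thesis by (simp add: op_hermitian_def op_eq_def)
qed

lemma op_conj_adj_mult:
  assumes "op_unitary n d V"
  shows "op_conj n d V (op_mult n d (op_adj A) A) = op_mult n d (op_adj (op_conj n d V A)) (op_conj n d V A)"
proof -
  have VV: "op_eq n d (op_mult n d V (op_adj V)) op_id"
    using assms by (simp add: op_unitary_def)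
  have "op_mult n d (op_adj (op_conj n d V A)) (op_conj n d V A)
      = op_mult n d (op_mult n d (op_adj V) (op_adj A))
          (op_mult n d (op_mult n d V (op_adj V)) (op_mult n d A V))"
    by (simp add: op_conj_def op_adj_mult op_mult_assoc)
  also have "\<dots> = op_mult n d (op_mult n d (op_adj V) (op_adj A)) (op_mult n d A V)"
    by (rule op_mult_cancel_middle[OF VV])
  finally show ?thesis by (simp add: op_conj_def op_mult_assoc)
qed

lemma op_conj_invariant:
  assumes "op_unitary n d V" and "op_eq n d (op_conj n d (op_adj V) h) h"
  shows "op_eq n d (op_conj n d V h) h"
  unfolding op_eq_def
proof (intro ballI)
  fix x y assume x: "x \<in> words n d" and y: "y \<in> words n d"
  have VV: "op_eq n d (op_mult n d (op_adj V) V) op_id"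
    using assms(1) by (simp add: op_unitary_def)
  have "op_conj n d V h = op_conj n d V (op_conj n d (op_adj V) h)"
    unfolding op_conj_def[of n d V] by (rule op_mult_op_eq_middle[OF assms(2), symmetric])
  also have "\<dots> = op_mult n d (op_mult n d (op_mult n d (op_adj V) V) h) (op_mult n d (op_adj V) V)"
    by (simp add: op_conj_def op_mult_assoc)
  finally show "op_conj n d V h x y = h x y"
    using x y VV by (simp add: op_mult_op_id_left op_mult_op_id_right)
qed

definition op_apply :: "nat \<Rightarrow> nat \<Rightarrow> qop \<Rightarrow> (nat list \<Rightarrow> complex) \<Rightarrow> nat list \<Rightarrow> complex" where
  "op_apply n d A v x = (\<Sum>y\<in>words n d. A x y * v y)"

definition op_form :: "nat \<Rightarrow> nat \<Rightarrow> qop \<Rightarrow> (nat list \<Rightarrow> complex) \<Rightarrow> complex" where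
  "op_form n d A v = (\<Sum>x\<in>words n d. cnj (v x) * op_apply n d A v x)"

lemma op_form_eq: "op_form n d A v = (\<Sum>x\<in>words n d. \<Sum>y\<in>words n d. cnj (v x) * A x y * v y)"
  unfolding op_form_def op_apply_def by (simp add: sum_distrib_left mult.assoc)

lemma op_apply_op_mult: "op_apply n d (op_mult n d A B) v = op_apply n d A (op_apply n d B v)"
  unfolding op_apply_def op_mult_def
  by (intro ext) (simp add: sum_distrib_left sum_distrib_right mult.assoc, rule sum.swap)

lemma sum_cnj_op_apply_adj:
  "(\<Sum>x\<in>words n d. cnj (v x) * op_apply n d (op_adj V) w x)
   = (\<Sum>u\<in>words n d. cnj (op_apply n d V v u) * w u)"
  unfolding op_apply_def op_adj_def
  by (simp add: sum_distrib_left sum_distrib_right ac_simps, rule sum.swap)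

lemma op_form_op_conj: "op_form n d (op_conj n d V R) v = op_form n d R (op_apply n d V v)"
  unfolding op_form_def op_conj_def op_apply_op_mult
  by (rule sum_cnj_op_apply_adj)

lemma nonneg_complex_iff: "(z \<in> \<real> \<and> 0 \<le> Re z) \<longleftrightarrow> 0 \<le> (z::complex)"
  by (auto simp: less_eq_complex_def complex_is_Real_iff)

lemma pseudo_density_iff:
  "pseudo_density n d t \<rho> \<longleftrightarrow> op_hermitian n d \<rho> \<and> op_tr n d \<rho> = 1 \<and>
     (\<forall>A. deg_le n d t A \<longrightarrow> 0 \<le> op_tr n d (op_mult n d \<rho> (op_mult n d (op_adj A) A)))"
  unfolding pseudo_density_def Let_def nonneg_complex_iff ..

lemma density_matrix_iff:
  "density_matrix n d \<rho> \<longleftrightarrow> op_hermitian n d \<rho> \<and> op_tr n d \<rho> = 1 \<and> (\<forall>v. 0 \<le> op_form n d \<rho> v)"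
  unfolding density_matrix_def Let_def nonneg_complex_iff op_form_eq ..

lemma op_apply_sum:
  "op_apply n d (\<lambda>x y. \<Sum>p\<in>P. c p * F p x y) v x = (\<Sum>p\<in>P. c p * op_apply n d (F p) v x)"
  unfolding op_apply_def by (simp add: sum_distrib_left sum_distrib_right mult.assoc, rule sum.swap)

lemma op_form_sum:
  "op_form n d (\<lambda>x y. \<Sum>p\<in>P. c p * F p x y) v = (\<Sum>p\<in>P. c p * op_form n d (F p) v)"
  unfolding op_form_def op_apply_sum
  by (simp add: sum_distrib_left mult.left_commute, rule sum.swap)

lemma nonneg_average:
  "(\<And>p. p \<in> P \<Longrightarrow> 0 \<le> f p) \<Longrightarrow> 0 \<le> (\<Sum>p\<in>P. inverse (of_nat (card P)) * f p :: complex)"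
  by (intro sum_nonneg mult_nonneg_nonneg) (auto simp: less_eq_complex_def)

definition twirl :: "nat \<Rightarrow> nat \<Rightarrow> 'p set \<Rightarrow> ('p \<Rightarrow> qop) \<Rightarrow> qop \<Rightarrow> qop" where
  "twirl n d P V R = (\<lambda>x y. \<Sum>p\<in>P. inverse (of_nat (card P)) * op_conj n d (op_adj (V p)) R x y)"

lemma op_tr_twirl_mult:
  "op_tr n d (op_mult n d (twirl n d P V R) X)
   = (\<Sum>p\<in>P. inverse (of_nat (card P)) * op_tr n d (op_mult n d R (op_conj n d (V p) X)))"
  unfolding twirl_def op_mult_sum_left op_tr_sum op_tr_mult_op_conj ..

lemma twirl_hermitian:
  assumes "op_hermitian n d R"
  shows "op_hermitian n d (twirl n d P V R)"
proof -
  have "cnj (op_conj n d (op_adj (V p)) R y x) = op_conj n d (op_adj (V p)) R x y"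
    if "x \<in> words n d" "y \<in> words n d" for p x y
    using op_hermitian_op_conj[OF assms] that by (simp add: op_hermitian_def op_eq_def op_adj_def)
  then show ?thesis
    by (simp add: op_hermitian_def op_eq_def op_adj_def twirl_def)
qed

lemma op_tr_twirl:
  assumes "finite P" "P \<noteq> {}" "\<And>p. p \<in> P \<Longrightarrow> op_unitary n d (V p)"
  shows "op_tr n d (twirl n d P V R) = op_tr n d R"
  using assms unfolding twirl_def op_tr_sum by (simp add: op_tr_op_conj)

lemma twirl_pseudo_density:
  assumes "finite P" "P \<noteq> {}" "\<And>p. p \<in> P \<Longrightarrow> op_unitary n d (V p)"
    and "\<And>p A. p \<in> P \<Longrightarrow> deg_le n d t A \<Longrightarrow> deg_le n d t (op_conj n d (V p) A)"
    and "pseudo_density n d t \<rho>"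
  shows "pseudo_density n d t (twirl n d P V \<rho>)"
  unfolding pseudo_density_iff
proof (intro conjI allI impI)
  show "op_hermitian n d (twirl n d P V \<rho>)" "op_tr n d (twirl n d P V \<rho>) = 1"
    using assms(5) by (simp_all add: twirl_hermitian op_tr_twirl[OF assms(1-3)] pseudo_density_iff)
  fix A assume A: "deg_le n d t A"
  have "0 \<le> op_tr n d (op_mult n d \<rho> (op_conj n d (V p) (op_mult n d (op_adj A) A)))" if "p \<in> P" for p
    using assms(5) A that by (simp add: op_conj_adj_mult assms(3,4) pseudo_density_iff)
  then show "0 \<le> op_tr n d (op_mult n d (twirl n d P V \<rho>) (op_mult n d (op_adj A) A))"
    unfolding op_tr_twirl_mult by (rule nonneg_average)
qed

lemma twirl_density_matrix:
  assumes "finite P" "P \<noteq> {}" "\<And>p. p \<in> P \<Longrightarrow> op_unitary n d (V p)"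
    and "density_matrix n d \<rho>"
  shows "density_matrix n d (twirl n d P V \<rho>)"
  unfolding density_matrix_iff
proof (intro conjI allI)
  show "op_hermitian n d (twirl n d P V \<rho>)" "op_tr n d (twirl n d P V \<rho>) = 1"
    using assms(4) by (simp_all add: twirl_hermitian op_tr_twirl[OF assms(1-3)] density_matrix_iff)
  fix v
  have "0 \<le> op_form n d (op_conj n d (op_adj (V p)) \<rho>) v" for p
    using assms(4) by (simp add: op_form_op_conj density_matrix_iff)
  then show "0 \<le> op_form n d (twirl n d P V \<rho>) v"
    unfolding twirl_def op_form_sum by (rule nonneg_average)
qed

lemma op_tr_twirl_mult_invariant:
  assumes "finite P" "P \<noteq> {}" "\<And>p. p \<in> P \<Longrightarrow> op_unitary n d (V p)"
    and "\<And>p. p \<in> P \<Longrightarrow> op_eq n d (op_conj n d (op_adj (V p)) h) h"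
  shows "op_tr n d (op_mult n d (twirl n d P V R) h) = op_tr n d (op_mult n d R h)"
proof -
  have "op_tr n d (op_mult n d R (op_conj n d (V p) h)) = op_tr n d (op_mult n d R h)" if "p \<in> P" for p
    using op_conj_invariant[OF assms(3,4)[OF that]] by (rule op_tr_mult_op_eq)
  then have "op_tr n d (op_mult n d (twirl n d P V R) h)
      = (\<Sum>p\<in>P. inverse (of_nat (card P)) * op_tr n d (op_mult n d R h))"
    unfolding op_tr_twirl_mult by (intro sum.cong) auto
  then show ?thesis
    using assms(1,2) by simp
qed

lemma op_tr_twirl_mult_eq_0:
  assumes "\<And>x y. x \<in> words n d \<Longrightarrow> y \<in> words n d \<Longrightarrow> (\<Sum>p\<in>P. op_conj n d (V p) X x y) = 0"
  shows "op_tr n d (op_mult n d (twirl n d P V R) X) = 0"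
proof -
  have "(\<Sum>p\<in>P. op_tr n d (op_mult n d R (op_conj n d (V p) X)))
      = op_tr n d (op_mult n d R (\<lambda>x y. \<Sum>p\<in>P. 1 * op_conj n d (V p) X x y))"
    unfolding op_mult_sum_right op_tr_sum by simp
  also have "\<dots> = op_tr n d (op_mult n d R (\<lambda>x y. 0))"
    using assms by (intro op_tr_mult_op_eq) (simp add: op_eq_def)
  also have "\<dots> = 0"
    by (simp add: op_tr_def op_mult_def)
  finally show ?thesis
    unfolding op_tr_twirl_mult sum_distrib_left[symmetric] by simp
qed

section \<open>Product operators and the Gell-Mann basis\<close>

definition mmult :: "nat \<Rightarrow> qmat \<Rightarrow> qmat \<Rightarrow> qmat" where
  "mmult d P Q i j = (\<Sum>k<d. P i k * Q k j)"

definition madj :: "qmat \<Rightarrow> qmat" where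
  "madj P i j = cnj (P j i)"

definition mid :: qmat where
  "mid i j = (if i = j then 1 else 0)"

definition mconj :: "nat \<Rightarrow> qmat \<Rightarrow> qmat \<Rightarrow> qmat" where
  "mconj d U M = mmult d (mmult d (madj U) M) U"

lemma madj_madj [simp]: "madj (madj P) = P"
  unfolding madj_def by simp

lemma unitary_mat_iff: "unitary_mat d U \<longleftrightarrow> (\<forall>i<d. \<forall>j<d. mmult d (madj U) U i j = mid i j)"
  unfolding unitary_mat_def mmult_def madj_def mid_def ..

definition prodop :: "nat \<Rightarrow> (nat \<Rightarrow> qmat) \<Rightarrow> qop" where
  "prodop n M x y = (\<Prod>i<n. M i (x ! i) (y ! i))"

lemma tensor_power_eq_prodop: "tensor_power n U = prodop n (\<lambda>_. U)"
  unfolding tensor_power_def prodop_def ..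

lemma gm_prod_eq_prodop: "gm_prod d gs = prodop (length gs) (\<lambda>i. gm_mat d (gs ! i))"
  unfolding gm_prod_def prodop_def ..

lemma gm_local_eq_prodop:
  assumes "u < n"
  shows "gm_local n d u g = prodop n (\<lambda>i. if i = u then gm_mat d g else mid)"
proof (intro ext)
  fix x y
  have "prodop n (\<lambda>i. if i = u then gm_mat d g else mid) x y
      = gm_mat d g (x ! u) (y ! u) * (\<Prod>i\<in>{..<n} - {u}. mid (x ! i) (y ! i))"
    unfolding prodop_def using assms by (subst prod.remove[of _ u]) auto
  then show "gm_local n d u g x y = prodop n (\<lambda>i. if i = u then gm_mat d g else mid) x y"
    by (simp add: gm_local_def mid_def)
qed

lemma op_mult_prodop: "op_mult n d (prodop n M) (prodop n N) = prodop n (\<lambda>i. mmult d (M i) (N i))"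
proof (intro ext)
  fix x y
  have "op_mult n d (prodop n M) (prodop n N) x y
      = (\<Sum>z\<in>{zs. set zs \<subseteq> {..<d} \<and> length zs = n}. \<Prod>i<n. M i (x ! i) (z ! i) * N i (z ! i) (y ! i))"
    unfolding op_mult_def prodop_def words_eq by (simp add: prod.distrib)
  also have "\<dots> = prodop n (\<lambda>i. mmult d (M i) (N i)) x y"
    unfolding prodop_def mmult_def by (rule sum_lists_length_eq_prod) simp
  finally show "op_mult n d (prodop n M) (prodop n N) x y = prodop n (\<lambda>i. mmult d (M i) (N i)) x y" .
qed

lemma op_adj_prodop: "op_adj (prodop n M) = prodop n (\<lambda>i. madj (M i))"
  unfolding op_adj_def prodop_def madj_def by (intro ext) simp

lemma op_conj_prodop: "op_conj n d (prodop n U) (prodop n M) = prodop n (\<lambda>i. mconj d (U i) (M i))"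
  unfolding op_conj_def mconj_def op_adj_prodop op_mult_prodop ..

lemma prodop_cong:
  assumes "\<And>i p q. i < n \<Longrightarrow> p < d \<Longrightarrow> q < d \<Longrightarrow> M i p q = N i p q"
    and "x \<in> words n d" and "y \<in> words n d"
  shows "prodop n M x y = prodop n N x y"
  unfolding prodop_def using assms by (intro prod.cong) (auto simp: words_def)

lemma prodop_mid:
  assumes "x \<in> words n d" and "y \<in> words n d"
  shows "prodop n (\<lambda>_. mid) x y = op_id x y"
proof -
  have "(\<forall>i<n. x ! i = y ! i) \<longleftrightarrow> x = y"
    using assms by (auto simp: words_def list_eq_iff_nth_eq)
  then show ?thesis
    by (auto simp: prodop_def mid_def op_id_def prod_zero_iff)
qed

(* unitary_mat only states U\<^sup>* U = I, so U U\<^sup>* = I is assumed as well rather than derived. *)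
lemma op_unitary_prodop:
  assumes "\<And>i. i < n \<Longrightarrow> unitary_mat d (U i)" and "\<And>i. i < n \<Longrightarrow> unitary_mat d (madj (U i))"
  shows "op_unitary n d (prodop n U)"
proof -
  have "op_eq n d (prodop n (\<lambda>i. mmult d (madj (W i)) (W i))) op_id"
    if "\<And>i. i < n \<Longrightarrow> unitary_mat d (W i)" for W
    unfolding op_eq_def
  proof (intro ballI)
    fix x y assume "x \<in> words n d" "y \<in> words n d"
    then show "prodop n (\<lambda>i. mmult d (madj (W i)) (W i)) x y = op_id x y"
      using that by (simp add: prodop_cong[of n d _ "\<lambda>_. mid"] unitary_mat_iff prodop_mid)
  qed
  from this[OF assms(1)] this[OF assms(2)] show ?thesis
    unfolding op_unitary_def op_adj_prodop op_mult_prodop by simp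
qed

lemma sum_diag_gm_coeffs:
  fixes m :: "nat \<Rightarrow> complex"
  assumes "k < N"
  shows "(\<Sum>a\<in>{1..<N}. ((\<Sum>i<a. m i) - of_nat a * m a) / (of_nat a * (of_nat a + 1)) *
            (if k < a then 1 else if k = a then - of_nat a else 0))
         = m k - (\<Sum>i<N. m i) / of_nat N"
  using assms
proof (induction N)
  case 0
  then show ?case by simp
next
  case (Suc N)
  let ?c = "\<lambda>a. ((\<Sum>i<a. m i) - of_nat a * m a) / (of_nat a * (of_nat a + 1))"
  let ?e = "\<lambda>a. if k < a then 1 else if k = a then - of_nat a else (0 :: complex)"
  have N: "(of_nat N + 1 :: complex) \<noteq> 0"
    by (metis of_nat_Suc of_nat_eq_0_iff nat.distinct(1) add.commute)
  show ?case
  proof (cases "k < N")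
    case True
    then have "{1..<Suc N} = insert N {1..<N}" and "(of_nat N :: complex) \<noteq> 0" by auto
    then have "(\<Sum>a\<in>{1..<Suc N}. ?c a * ?e a) = ?c N + (m k - (\<Sum>i<N. m i) / of_nat N)"
      using Suc.IH[OF True] True by simp
    also have "\<dots> = m k - (\<Sum>i<Suc N. m i) / of_nat (Suc N)"
      using \<open>(of_nat N :: complex) \<noteq> 0\<close> N by (simp add: divide_simps) (simp add: algebra_simps)
    finally show ?thesis .
  next
    case False
    then have k: "k = N" using Suc.prems by simp
    show ?thesis
    proof (cases "N = 0")
      case True
      then show ?thesis using k by simp
    next
      case False
      then have "{1..<Suc N} = insert N {1..<N}" by auto
      moreover have "(\<Sum>a\<in>{1..<N}. ?c a * ?e a) = 0"
        using k by (intro sum.neutral) auto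
      ultimately have "(\<Sum>a\<in>{1..<Suc N}. ?c a * ?e a) = - of_nat N * ?c N"
        using k by simp
      also have "\<dots> = (of_nat N * m N - (\<Sum>i<N. m i)) / (of_nat N + 1)"
        using \<open>N \<noteq> 0\<close> by (simp add: divide_simps)
      also have "\<dots> = m k - (\<Sum>i<Suc N. m i) / of_nat (Suc N)"
        using k N by (simp add: divide_simps) (simp add: algebra_simps)
      finally show ?thesis .
    qed
  qed
qed

(* The Hilbert-Schmidt coefficients tr(\<Lambda>\<^sup>g M) / tr((\<Lambda>\<^sup>g)\<^sup>2). *)
definition gm_coeff :: "nat \<Rightarrow> qmat \<Rightarrow> gm \<Rightarrow> complex" where
  "gm_coeff d M g = (case g of
       GId \<Rightarrow> (\<Sum>k<d. M k k) / (of_nat d * complex_of_real (sqrt (2 / real d)))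
     | GSym p q \<Rightarrow> (M p q + M q p) / 2
     | GAsym p q \<Rightarrow> \<i> * (M p q - M q p) / 2
     | GDiag a \<Rightarrow> ((\<Sum>k<a. M k k) - of_nat a * M a a) / (of_nat a * (of_nat a + 1))
                   / complex_of_real (sqrt (2 / (real a * (real a + 1)))))"

lemma finite_gm_valid: "finite {g. gm_valid d g}"
proof (rule finite_subset)
  let ?P = "{..<d} \<times> {..<d}"
  show "{g. gm_valid d g} \<subseteq> insert GId (case_prod GSym ` ?P \<union> case_prod GAsym ` ?P \<union> GDiag ` {..<d})"
  proof
    fix g assume "g \<in> {g. gm_valid d g}"
    then show "g \<in> insert GId (case_prod GSym ` ?P \<union> case_prod GAsym ` ?P \<union> GDiag ` {..<d})"
      by (cases g) (auto simp: gm_valid_def)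
  qed
qed simp

lemma gm_expansion:
  assumes "1 \<le> d" "i < d" "j < d"
  shows "M i j = (\<Sum>g\<in>{g. gm_valid d g}. gm_coeff d M g * gm_mat d g i j)"
proof (cases "i = j")
  case True
  let ?S = "insert GId (GDiag ` {1..<d})"
  have "(\<Sum>g\<in>{g. gm_valid d g}. gm_coeff d M g * gm_mat d g i j)
      = (\<Sum>g\<in>?S. gm_coeff d M g * gm_mat d g i i)"
    unfolding True by (intro sum.mono_neutral_right finite_gm_valid)
      (auto simp: gm_valid_def gm_mat_def split: gm.splits)
  also have "\<dots> = gm_coeff d M GId * gm_mat d GId i i
      + (\<Sum>a\<in>{1..<d}. gm_coeff d M (GDiag a) * gm_mat d (GDiag a) i i)"
    by (subst sum.insert) (auto simp: sum.reindex inj_on_def)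
  also have "\<dots> = (\<Sum>k<d. M k k) / of_nat d
      + (\<Sum>a\<in>{1..<d}. ((\<Sum>k<a. M k k) - of_nat a * M a a) / (of_nat a * (of_nat a + 1)) *
                       (if i < a then 1 else if i = a then - of_nat a else 0))"
    using assms by (simp add: gm_coeff_def gm_mat_def)
  also have "\<dots> = M i j"
    using sum_diag_gm_coeffs[OF assms(2), of "\<lambda>k. M k k"] True by simp
  finally show ?thesis ..
next
  case False
  define p q where "p = min i j" and "q = max i j"
  have pq: "p < q" "q < d" "{i, j} = {p, q}"
    using False assms unfolding p_def q_def by auto
  have "(\<Sum>g\<in>{g. gm_valid d g}. gm_coeff d M g * gm_mat d g i j)
      = (\<Sum>g\<in>{GSym p q, GAsym p q}. gm_coeff d M g * gm_mat d g i j)"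
    using pq by (intro sum.mono_neutral_right finite_gm_valid)
      (auto simp: gm_valid_def gm_mat_def doubleton_eq_iff split: gm.splits)
  also have "\<dots> = M i j"
    using pq False by (auto simp: gm_coeff_def gm_mat_def doubleton_eq_iff field_simps)
  finally show ?thesis ..
qed

(* Coefficients of U\<^sup>* \<Lambda>\<^sup>g U.  For g = GId they are given directly (U\<^sup>* I U = I), so that an
   identity factor never acquires non-identity components: this is why conjugation by
   product unitaries cannot raise the degree. *)
definition conj_coeff :: "nat \<Rightarrow> qmat \<Rightarrow> gm \<Rightarrow> gm \<Rightarrow> complex" where
  "conj_coeff d U g h =
     (if g = GId then (if h = GId then 1 else 0) else gm_coeff d (mconj d U (gm_mat d g)) h)"

lemma mconj_gm_mat_expansion:
  assumes "1 \<le> d" "unitary_mat d U" "i < d" "j < d"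
  shows "mconj d U (gm_mat d g) i j = (\<Sum>h\<in>{h. gm_valid d h}. conj_coeff d U g h * gm_mat d h i j)"
proof (cases "g = GId")
  case True
  have "mconj d U (gm_mat d GId) i j = (\<Sum>k<d. madj U i k * gm_mat d GId 0 0 * U k j)"
    unfolding mconj_def mmult_def
    by (intro sum.cong refl) (simp add: gm_mat_def if_distrib[of "\<lambda>z. _ * z"] cong: if_cong)
  also have "\<dots> = gm_mat d GId 0 0 * mmult d (madj U) U i j"
    by (simp add: mmult_def sum_distrib_left ac_simps)
  also have "\<dots> = gm_mat d GId i j"
    using assms by (simp add: unitary_mat_iff mid_def gm_mat_def)
  also have "\<dots> = (\<Sum>h\<in>{h. gm_valid d h}. (if h = GId then 1 else 0) * gm_mat d h i j)"
    by (simp add: if_distrib[of "\<lambda>z. z * _"] sum.delta[OF finite_gm_valid] cong: if_cong)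
      (simp add: gm_valid_def)
  finally show ?thesis
    using True by (simp add: conj_coeff_def)
next
  case False
  then show ?thesis
    using gm_expansion[OF assms(1,3,4)] by (simp add: conj_coeff_def)
qed

lemma gm_labels_eq: "gm_labels n d = {gs. set gs \<subseteq> {g. gm_valid d g} \<and> length gs = n}"
  unfolding gm_labels_def by auto

lemma finite_gm_labels: "finite (gm_labels n d)"
  unfolding gm_labels_eq by (rule finite_lists_length_eq[OF finite_gm_valid])

lemma prodop_gm_expansion:
  assumes "finite S"
  shows "prodop n (\<lambda>i p q. \<Sum>h\<in>S. F i h * gm_mat d h p q) x y
       = (\<Sum>hs\<in>{hs. set hs \<subseteq> S \<and> length hs = n}. (\<Prod>i<n. F i (hs ! i)) * gm_prod d hs x y)"
proof -
  have "prodop n (\<lambda>i p q. \<Sum>h\<in>S. F i h * gm_mat d h p q) x y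
      = (\<Sum>hs\<in>{hs. set hs \<subseteq> S \<and> length hs = n}. \<Prod>i<n. F i (hs ! i) * gm_mat d (hs ! i) (x ! i) (y ! i))"
    unfolding prodop_def by (rule sum_lists_length_eq_prod[OF assms, symmetric])
  also have "\<dots> = (\<Sum>hs\<in>{hs. set hs \<subseteq> S \<and> length hs = n}. (\<Prod>i<n. F i (hs ! i)) * gm_prod d hs x y)"
    by (intro sum.cong refl) (simp add: prod.distrib gm_prod_def)
  finally show ?thesis .
qed

lemma prod_conj_coeff_eq_0:
  assumes "length gs = n" "length hs = n" "gm_degree gs < gm_degree hs"
  shows "(\<Prod>i<n. conj_coeff d (U i) (gs ! i) (hs ! i)) = 0"
proof -
  have "\<exists>i<n. gs ! i = GId \<and> hs ! i \<noteq> GId"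
  proof (rule ccontr)
    assume "\<not> ?thesis"
    then have "{i. i < length hs \<and> hs ! i \<noteq> GId} \<subseteq> {i. i < length gs \<and> gs ! i \<noteq> GId}"
      using assms(1,2) by auto
    then have "gm_degree hs \<le> gm_degree gs"
      unfolding gm_degree_def by (rule card_mono[rotated]) simp
    then show False using assms(3) by simp
  qed
  then show ?thesis
    by (auto simp: conj_coeff_def prod_zero_iff)
qed

lemma op_conj_prodop_gm_prod:
  assumes "1 \<le> d" "\<And>i. i < n \<Longrightarrow> unitary_mat d (U i)"
    and "gs \<in> gm_labels n d" "gm_degree gs \<le> t" "x \<in> words n d" "y \<in> words n d"
  shows "op_conj n d (prodop n U) (gm_prod d gs) x y
       = (\<Sum>hs\<in>{hs \<in> gm_labels n d. gm_degree hs \<le> t}.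
            (\<Prod>i<n. conj_coeff d (U i) (gs ! i) (hs ! i)) * gm_prod d hs x y)"
proof -
  have len: "length gs = n"
    using assms(3) by (simp add: gm_labels_def)
  have "op_conj n d (prodop n U) (gm_prod d gs) x y = prodop n (\<lambda>i. mconj d (U i) (gm_mat d (gs ! i))) x y"
    by (simp add: gm_prod_eq_prodop len op_conj_prodop)
  also have "\<dots> = prodop n (\<lambda>i p q. \<Sum>h\<in>{h. gm_valid d h}. conj_coeff d (U i) (gs ! i) h * gm_mat d h p q) x y"
    using assms(1,2,5,6) by (intro prodop_cong) (simp_all add: mconj_gm_mat_expansion)
  also have "\<dots> = (\<Sum>hs\<in>gm_labels n d. (\<Prod>i<n. conj_coeff d (U i) (gs ! i) (hs ! i)) * gm_prod d hs x y)"
    unfolding prodop_gm_expansion[OF finite_gm_valid] gm_labels_eq ..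
  also have "\<dots> = (\<Sum>hs\<in>{hs \<in> gm_labels n d. gm_degree hs \<le> t}.
                    (\<Prod>i<n. conj_coeff d (U i) (gs ! i) (hs ! i)) * gm_prod d hs x y)"
  proof (intro sum.mono_neutral_right finite_gm_labels ballI)
    fix hs assume "hs \<in> gm_labels n d - {hs \<in> gm_labels n d. gm_degree hs \<le> t}"
    then have "length hs = n" "gm_degree gs < gm_degree hs"
      using assms(4) by (auto simp: gm_labels_def)
    then show "(\<Prod>i<n. conj_coeff d (U i) (gs ! i) (hs ! i)) * gm_prod d hs x y = 0"
      using len by (simp add: prod_conj_coeff_eq_0)
  qed auto
  finally show ?thesis .
qed

lemma deg_le_op_conj_prodop:
  assumes "1 \<le> d" "\<And>i. i < n \<Longrightarrow> unitary_mat d (U i)" and "deg_le n d t A"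
  shows "deg_le n d t (op_conj n d (prodop n U) A)"
proof -
  let ?L = "{gs \<in> gm_labels n d. gm_degree gs \<le> t}"
  let ?E = "\<lambda>gs hs. \<Prod>i<n. conj_coeff d (U i) (gs ! i) (hs ! i)"
  obtain c where c: "op_eq n d A (\<lambda>x y. \<Sum>gs\<in>?L. c gs * gm_prod d gs x y)"
    using assms(3) unfolding deg_le_def by blast
  have "op_conj n d (prodop n U) A x y = (\<Sum>hs\<in>?L. (\<Sum>gs\<in>?L. c gs * ?E gs hs) * gm_prod d hs x y)"
    if "x \<in> words n d" "y \<in> words n d" for x y
  proof -
    have "op_conj n d (prodop n U) A x y
        = op_conj n d (prodop n U) (\<lambda>x y. \<Sum>gs\<in>?L. c gs * gm_prod d gs x y) x y"
      unfolding op_conj_def by (simp only: op_mult_op_eq_middle[OF c])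
    also have "\<dots> = (\<Sum>gs\<in>?L. c gs * op_conj n d (prodop n U) (gm_prod d gs) x y)"
      unfolding op_conj_def op_mult_sum_right op_mult_sum_left ..
    also have "\<dots> = (\<Sum>gs\<in>?L. c gs * (\<Sum>hs\<in>?L. ?E gs hs * gm_prod d hs x y))"
      using assms(1,2) that by (intro sum.cong refl) (simp add: op_conj_prodop_gm_prod)
    also have "\<dots> = (\<Sum>hs\<in>?L. (\<Sum>gs\<in>?L. c gs * ?E gs hs) * gm_prod d hs x y)"
      unfolding sum_distrib_left sum_distrib_right mult.assoc by (rule sum.swap)
    finally show ?thesis .
  qed
  then show ?thesis
    unfolding deg_le_def op_eq_def by (intro exI[of _ "\<lambda>hs. \<Sum>gs\<in>?L. c gs * ?E gs hs"]) simp
qed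

section \<open>Weyl operators\<close>

lemma mod_add_right_inj:
  fixes i j a d :: nat
  assumes "i < d" "j < d" "(i + a) mod d = (j + a) mod d"
  shows "i = j"
proof -
  have "i = j" if "i \<le> j" "j < d" "(i + a) mod d = (j + a) mod d" for i j
  proof -
    have "d dvd j - i"
      using that mod_eq_dvd_iff_nat[of "i + a" "j + a" d] by simp
    moreover have "j - i < d"
      using that by simp
    ultimately have "j - i = 0"
      using dvd_imp_le by (metis gr0I leD)
    then show "i = j"
      using that by simp
  qed
  from this[of i j] this[of j i] assms show ?thesis by linarith
qed

lemma sum_mod_shift:
  fixes d a :: nat and f :: "nat \<Rightarrow> 'a::comm_monoid_add"
  assumes "0 < d"
  shows "(\<Sum>k<d. f ((k + a) mod d)) = (\<Sum>k<d. f k)"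
proof -
  have inj: "inj_on (\<lambda>k. (k + a) mod d) {..<d}"
  proof (rule inj_onI)
    fix x y assume "x \<in> {..<d}" "y \<in> {..<d}" "(x + a) mod d = (y + a) mod d"
    then show "x = y" by (intro mod_add_right_inj[of x d y a]) auto
  qed
  then have "(\<lambda>k. (k + a) mod d) ` {..<d} = {..<d}"
    using assms by (intro endo_inj_surj) auto
  then show ?thesis
    using sum.reindex[OF inj, of f] by simp
qed

definition weyl_phase :: "nat \<Rightarrow> nat \<Rightarrow> nat \<Rightarrow> complex" where
  "weyl_phase d b j = cis (2 * pi * real b * real j / real d)"

definition weyl_mat :: "nat \<Rightarrow> nat \<Rightarrow> nat \<Rightarrow> qmat" where
  "weyl_mat d a b i j = (if i = (j + a) mod d then weyl_phase d b j else 0)"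

lemma weyl_phase_cnj_mult [simp]:
  "cnj (weyl_phase d b j) * weyl_phase d b j = 1" "weyl_phase d b j * cnj (weyl_phase d b j) = 1"
  unfolding weyl_phase_def by (simp_all add: cis_cnj cis_mult)

lemma madj_weyl_mat_mult:
  assumes "i < d"
  shows "mmult d (madj (weyl_mat d a b)) L i j = cnj (weyl_phase d b i) * L ((i + a) mod d) j"
proof -
  have "mmult d (madj (weyl_mat d a b)) L i j
      = (\<Sum>k<d. if k = (i + a) mod d then cnj (weyl_phase d b i) * L k j else 0)"
    unfolding mmult_def madj_def weyl_mat_def by (intro sum.cong) auto
  then show ?thesis
    using assms by simp
qed

lemma mconj_weyl_mat:
  assumes "i < d" "j < d"
  shows "mconj d (weyl_mat d a b) L i j
       = cnj (weyl_phase d b i) * weyl_phase d b j * L ((i + a) mod d) ((j + a) mod d)"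
proof -
  have "mconj d (weyl_mat d a b) L i j
      = (\<Sum>k<d. if k = (j + a) mod d then cnj (weyl_phase d b i) * L ((i + a) mod d) k * weyl_phase d b j else 0)"
    unfolding mconj_def mmult_def[of d "mmult d _ _"] madj_weyl_mat_mult[OF assms(1)]
    by (intro sum.cong) (auto simp: weyl_mat_def)
  then show ?thesis
    using assms by (simp add: ac_simps)
qed

lemma unitary_weyl_mat: "unitary_mat d (weyl_mat d a b)"
  unfolding unitary_mat_iff
proof (intro allI impI)
  fix i j assume "i < d" "j < d"
  then show "mmult d (madj (weyl_mat d a b)) (weyl_mat d a b) i j = mid i j"
    using mod_add_right_inj[of i d j a]
    by (auto simp: madj_weyl_mat_mult weyl_mat_def mid_def)
qed

lemma unitary_madj_weyl_mat:
  assumes "0 < d"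
  shows "unitary_mat d (madj (weyl_mat d a b))"
  unfolding unitary_mat_iff
proof (intro allI impI)
  fix i j assume "i < d" "j < d"
  have "mmult d (madj (madj (weyl_mat d a b))) (madj (weyl_mat d a b)) i j
      = (\<Sum>k<d. (\<lambda>m. if i = m \<and> j = m then 1 else 0) ((k + a) mod d))"
    unfolding mmult_def madj_madj by (intro sum.cong) (auto simp: madj_def weyl_mat_def mult.commute)
  also have "\<dots> = (\<Sum>m<d. if i = m \<and> j = m then 1 else 0)"
    by (rule sum_mod_shift[OF assms])
  also have "\<dots> = mid i j"
    using \<open>i < d\<close> by (cases "i = j") (auto simp: mid_def intro: sum.neutral)
  finally show "mmult d (madj (madj (weyl_mat d a b))) (madj (weyl_mat d a b)) i j = mid i j" .
qed

lemma sum_cnj_weyl_phase_mult: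
  assumes "i < d" "j < d"
  shows "(\<Sum>b<d. cnj (weyl_phase d b i) * weyl_phase d b j) = (if i = j then of_nat d else 0)"
proof (cases "i = j")
  case True
  then show ?thesis by simp
next
  case False
  define z where "z = cis (2 * pi * (real j - real i) / real d)"
  have z_power: "cnj (weyl_phase d b i) * weyl_phase d b j = z ^ b" for b
    unfolding weyl_phase_def z_def DeMoivre cis_cnj cis_mult
    by (rule arg_cong[where f = cis]) (use assms in \<open>simp add: field_simps\<close>)
  have "z ^ d = cis (2 * pi * of_int (int j - int i))"
    unfolding z_def DeMoivre using assms by (intro arg_cong[where f = cis]) (simp add: field_simps)
  then have "z ^ d = 1"
    by (simp add: cis_multiple_2pi)
  have "z \<noteq> 1"
  proof
    assume "z = 1"
    then have "cos (2 * pi * (real j - real i) / real d) = 1"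
      unfolding z_def by (metis cis.sel(1) one_complex.sel(1))
    then obtain m :: int where "2 * pi * (real j - real i) / real d = of_int m * 2 * pi"
      using cos_one_2pi_int by blast
    then have "(2 * pi) * (real j - real i) = (2 * pi) * (of_int m * real d)"
      using assms by (simp add: divide_eq_eq algebra_simps)
    then have "real j - real i = of_int m * real d"
      by simp
    then have "int j - int i = m * int d"
      by (metis of_int_eq_iff of_int_mult of_int_of_nat_eq of_int_diff)
    moreover have "\<bar>int j - int i\<bar> < int d"
      using assms by simp
    ultimately have "\<bar>m\<bar> * int d < 1 * int d"
      by (simp add: abs_mult)
    then have "m = 0"
      by (simp only: mult_less_cancel_right) simp
    then show False
      using \<open>int j - int i = m * int d\<close> False by simp
  qed
  have "(\<Sum>b<d. cnj (weyl_phase d b i) * weyl_phase d b j) = (\<Sum>b<d. z ^ b)"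
    by (simp add: z_power)
  also have "\<dots> = 0"
    using \<open>z ^ d = 1\<close> \<open>z \<noteq> 1\<close> by (simp add: sum_gp_strict)
  finally show ?thesis
    using False by simp
qed

lemma sum_mconj_weyl_mat:
  assumes "i < d" "j < d"
  shows "(\<Sum>a<d. \<Sum>b<d. mconj d (weyl_mat d a b) L i j) = (if i = j then of_nat d * (\<Sum>k<d. L k k) else 0)"
proof -
  have "(\<Sum>a<d. \<Sum>b<d. mconj d (weyl_mat d a b) L i j)
      = (\<Sum>a<d. (\<Sum>b<d. cnj (weyl_phase d b i) * weyl_phase d b j) * L ((i + a) mod d) ((j + a) mod d))"
    using assms by (simp add: mconj_weyl_mat sum_distrib_right)
  also have "\<dots> = (if i = j then of_nat d * (\<Sum>a<d. L ((i + a) mod d) ((i + a) mod d)) else 0)"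
    using assms by (simp add: sum_cnj_weyl_phase_mult sum_distrib_left)
  also have "(\<Sum>a<d. L ((i + a) mod d) ((i + a) mod d)) = (\<Sum>k<d. L k k)"
    using sum_mod_shift[of d "\<lambda>k. L k k" i] assms by (simp add: add.commute)
  finally show ?thesis .
qed

lemma mconj_mid:
  assumes "unitary_mat d U" "i < d" "j < d"
  shows "mconj d U mid i j = mid i j"
proof -
  have "mconj d U mid i j = mmult d (madj U) U i j"
    unfolding mconj_def mmult_def
    by (intro sum.cong refl) (simp add: mid_def if_distrib[of "\<lambda>z. _ * z"] cong: if_cong)
  then show ?thesis
    using assms by (simp add: unitary_mat_iff)
qed

lemma sum_op_conj_weyl_local_eq_0:
  assumes "0 < d" "(\<Sum>k<d. L k k) = 0" "u < n" "x \<in> words n d" "y \<in> words n d"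
  shows "(\<Sum>p\<in>{..<d} \<times> {..<d}. op_conj n d (tensor_power n (weyl_mat d (fst p) (snd p)))
            (prodop n (\<lambda>i. if i = u then L else mid)) x y) = 0"
proof -
  let ?R = "\<Prod>i\<in>{..<n} - {u}. mid (x ! i) (y ! i)"
  have "op_conj n d (tensor_power n (weyl_mat d a b)) (prodop n (\<lambda>i. if i = u then L else mid)) x y
      = mconj d (weyl_mat d a b) L (x ! u) (y ! u) * ?R" for a b
  proof -
    have "(\<Prod>i\<in>{..<n} - {u}. mconj d (weyl_mat d a b) (if i = u then L else mid) (x ! i) (y ! i)) = ?R"
      using assms(4,5) by (intro prod.cong refl) (auto simp: words_def mconj_mid unitary_weyl_mat)
    then show ?thesis
      unfolding tensor_power_eq_prodop op_conj_prodop prodop_def using assms(3)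
      by (simp add: prod.remove[of _ u])
  qed
  then have "(\<Sum>p\<in>{..<d} \<times> {..<d}. op_conj n d (tensor_power n (weyl_mat d (fst p) (snd p)))
               (prodop n (\<lambda>i. if i = u then L else mid)) x y)
      = (\<Sum>a<d. \<Sum>b<d. mconj d (weyl_mat d a b) L (x ! u) (y ! u)) * ?R"
    by (simp add: sum.cartesian_product case_prod_beta sum_distrib_right)
  also have "\<dots> = 0"
    using assms by (simp add: sum_mconj_weyl_mat words_def)
  finally show ?thesis .
qed

lemma trace_gm_mat:
  assumes "gm_valid d g" "g \<noteq> GId"
  shows "(\<Sum>k<d. gm_mat d g k k) = 0"
proof (cases g)
  case (GDiag a)
  then have a: "1 \<le> a" "a < d"
    using assms by (auto simp: gm_valid_def)
  have "(\<Sum>k<d. if k < a then 1 else if k = a then - of_nat a else 0 :: complex)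
      = (\<Sum>k\<in>{..<a}. 1) + (\<Sum>k\<in>{a}. - of_nat a)"
    using a by (subst sum.mono_neutral_right[of "{..<d}" "{..<a} \<union> {a}"])
      (auto simp: sum.union_disjoint intro: sum.cong)
  then show ?thesis
    using GDiag by (simp add: gm_mat_def sum_distrib_left[symmetric])
qed (use assms in \<open>auto simp: gm_valid_def gm_mat_def intro!: sum.neutral\<close>)

theorem mainTheorem14:
  fixes n d t :: nat and I :: "'i set" and h :: "'i \<Rightarrow> qop" and \<rho> :: qop
  assumes "n \<ge> 1" and "d \<ge> 2" and "t \<ge> 1"
    and "finite I"
    and "\<And>\<alpha>. \<alpha> \<in> I \<Longrightarrow> op_hermitian n d (h \<alpha>)"
    and "\<And>\<alpha>. \<alpha> \<in> I \<Longrightarrow> unitary_invariant n d (h \<alpha>)"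
    and "pseudo_density n d t \<rho>"
  shows "\<exists>\<rho>'. pseudo_density n d t \<rho>' \<and>
           (density_matrix n d \<rho> \<longrightarrow> density_matrix n d \<rho>') \<and>
           (\<forall>g u. gm_valid d g \<and> g \<noteq> GId \<and> u < n \<longrightarrow>
                  op_tr n d (op_mult n d \<rho>' (gm_local n d u g)) = 0) \<and>
           (\<forall>\<alpha>\<in>I. op_tr n d (op_mult n d \<rho>' (h \<alpha>)) = op_tr n d (op_mult n d \<rho> (h \<alpha>)))"
proof -
  define P where "P = {..<d} \<times> {..<d}"
  define V where "V p = tensor_power n (weyl_mat d (fst p) (snd p))" for p
  have d: "0 < d" "1 \<le> d"
    using assms(2) by auto
  have P: "finite P" "P \<noteq> {}"
    using d by (auto simp: P_def lessThan_empty_iff)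
  have V_unitary: "op_unitary n d (V p)" for p
    unfolding V_def tensor_power_eq_prodop
    using d by (intro op_unitary_prodop unitary_weyl_mat unitary_madj_weyl_mat)
  have V_degree: "deg_le n d t (op_conj n d (V p) A)" if "deg_le n d t A" for p A
    unfolding V_def tensor_power_eq_prodop
    using d that by (intro deg_le_op_conj_prodop unitary_weyl_mat)
  have V_invariant: "op_eq n d (op_conj n d (op_adj (V p)) (h \<alpha>)) (h \<alpha>)" if "\<alpha> \<in> I" for p \<alpha>
    using assms(6)[OF that] unitary_weyl_mat by (simp add: unitary_invariant_def op_conj_def V_def)
  have local_zero: "op_tr n d (op_mult n d (twirl n d P V \<rho>) (gm_local n d u g)) = 0"
    if "gm_valid d g" "g \<noteq> GId" "u < n" for g u
  proof (rule op_tr_twirl_mult_eq_0)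
    fix x y assume "x \<in> words n d" "y \<in> words n d"
    then show "(\<Sum>p\<in>P. op_conj n d (V p) (gm_local n d u g) x y) = 0"
      unfolding P_def V_def gm_local_eq_prodop[OF \<open>u < n\<close>]
      by (rule sum_op_conj_weyl_local_eq_0[where L = "gm_mat d g", OF d(1) trace_gm_mat[OF that(1,2)] that(3)])
  qed
  show ?thesis
  proof (intro exI[of _ "twirl n d P V \<rho>"] conjI impI allI ballI)
    show "pseudo_density n d t (twirl n d P V \<rho>)"
      by (rule twirl_pseudo_density[OF P V_unitary V_degree assms(7)])
    show "density_matrix n d (twirl n d P V \<rho>)" if "density_matrix n d \<rho>"
      by (rule twirl_density_matrix[OF P V_unitary that])
    show "op_tr n d (op_mult n d (twirl n d P V \<rho>) (gm_local n d u g)) = 0"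
      if "gm_valid d g \<and> g \<noteq> GId \<and> u < n" for g u
      using that by (simp add: local_zero)
    show "op_tr n d (op_mult n d (twirl n d P V \<rho>) (h \<alpha>)) = op_tr n d (op_mult n d \<rho> (h \<alpha>))"
      if "\<alpha> \<in> I" for \<alpha>
      by (rule op_tr_twirl_mult_invariant[OF P V_unitary V_invariant[OF that]])
  qed
qed

end
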